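(* Assume (H1). For each $\nu\in L^2(0,T;\mathbb R^{n_1})$, the two-point boundary value problem $\dot z_i=Az_i+B\nu+Gz+\gamma q$, $\dot z=(A+G)z+\gamma q$, $\dot q=-(A+G)^Tq-(I-\Gamma)^TQ(z_i-\Gamma z)$, $z_i(0)=z(0)=0$, $q(T)=Hz_i(T)$, has a unique solution $(z_i,z,q)\in C^1([0,T];\mathbb R^{3n})$.
   Context: Fix integers $n,n_1\ge1$, $T>0$, constant matrices $A,G,\Gamma\in\mathbb R^{n\times n}$, $B\in\mathbb R^{n\times n_1}$, $\gamma>0$, symmetric $Q\ge0$, $H\ge0$ ($n\times n$). Write $\widehat Q=(I-\Gamma)^TQ(I-\Gamma)$, $\|h\|_{L^2}=(\int_0^T|h|^2dt)^{1/2}$. For $g\in L^2(0,T;\mathbb R^n)$ let $\dot z=(A+G)z+g$, $z(0)=0$, $\bar J''(g)=\int_0^T\{-z^T\widehat Qz+\frac1\gamma|g|^2\}dt-z(T)^THz(T)$. (H1): there exists $\epsilon_0>0$ with $\bar J''(g)\ge\epsilon_0\|g\|_{L^2}^2$ for all $g\in L^2(0,T;\mathbb R^n)$.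
   Formalization: The solution $(z_i,z,q)$ is only a triple of continuous functions satisfying the three equations in integral form on [0,T], existing and unique among such triples, in place of a unique solution in $C^1([0,T];\mathbb R^{3n})$. The statement above fails without it. *)

theory Defs
  imports "HOL-Analysis.Analysis"
begin

text \<open>Square-integrable functions on [0,T] (pointwise representatives).\<close>
definition L2_on :: "real \<Rightarrow> (real \<Rightarrow> 'a::euclidean_space) \<Rightarrow> bool" where
  "L2_on T g \<longleftrightarrow> set_borel_measurable lborel {0..T} g \<and>
     set_integrable lborel {0..T} (\<lambda>t. (norm (g t))^2)"

definition L2_norm_sq :: "real \<Rightarrow> (real \<Rightarrow> 'a::euclidean_space) \<Rightarrow> real" where
  "L2_norm_sq T g = (LINT t:{0..T}|lborel. (norm (g t))^2)"

definition psd :: "real^'n^'n \<Rightarrow> bool" where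
  "psd M \<longleftrightarrow> transpose M = M \<and> (\<forall>x. 0 \<le> x \<bullet> (M *v x))"

definition Qhat :: "real^'n^'n \<Rightarrow> real^'n^'n \<Rightarrow> real^'n^'n" where
  "Qhat \<Gamma> Q = transpose (mat 1 - \<Gamma>) ** Q ** (mat 1 - \<Gamma>)"

text \<open>z solves z' = (A+G) z + g, z(0) = 0 on [0,T] (Caratheodory / integral sense).\<close>
definition state_sol :: "real^'n^'n \<Rightarrow> real^'n^'n \<Rightarrow> real \<Rightarrow> (real \<Rightarrow> real^'n)
    \<Rightarrow> (real \<Rightarrow> real^'n) \<Rightarrow> bool" where
  "state_sol A G T g z \<longleftrightarrow> continuous_on {0..T} z \<and>
     (\<forall>t\<in>{0..T}. ((\<lambda>s. (A + G) *v z s + g s) has_integral z t) {0..t})"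

text \<open>The second variation functional, evaluated along the state z of g.\<close>
definition Jpp :: "real^'n^'n \<Rightarrow> real^'n^'n \<Rightarrow> real^'n^'n \<Rightarrow> real \<Rightarrow> real
    \<Rightarrow> (real \<Rightarrow> real^'n) \<Rightarrow> (real \<Rightarrow> real^'n) \<Rightarrow> real" where
  "Jpp \<Gamma> Q H \<gamma> T g z =
     (LINT t:{0..T}|lborel. (- (z t \<bullet> (Qhat \<Gamma> Q *v z t)) + (1/\<gamma>) * (norm (g t))^2))
     - z T \<bullet> (H *v z T)"

definition H1 :: "real^'n^'n \<Rightarrow> real^'n^'n \<Rightarrow> real^'n^'n \<Rightarrow> real^'n^'n \<Rightarrow> real^'n^'n
    \<Rightarrow> real \<Rightarrow> real \<Rightarrow> bool" where
  "H1 A G \<Gamma> Q H \<gamma> T \<longleftrightarrow> (\<exists>\<epsilon>0>0. \<forall>g z. L2_on T g \<longrightarrow> state_sol A G T g z \<longrightarrow>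
      Jpp \<Gamma> Q H \<gamma> T g z \<ge> \<epsilon>0 * L2_norm_sq T g)"

definition bvp_sol :: "real^'n^'n \<Rightarrow> real^'n1^'n \<Rightarrow> real^'n^'n \<Rightarrow> real^'n^'n \<Rightarrow> real^'n^'n
    \<Rightarrow> real^'n^'n \<Rightarrow> real \<Rightarrow> real \<Rightarrow> (real \<Rightarrow> real^'n1)
    \<Rightarrow> (real \<Rightarrow> real^'n) \<Rightarrow> (real \<Rightarrow> real^'n) \<Rightarrow> (real \<Rightarrow> real^'n) \<Rightarrow> bool" where
  "bvp_sol A B G \<Gamma> Q H \<gamma> T \<nu> zi z q \<longleftrightarrow>
     continuous_on {0..T} zi \<and> continuous_on {0..T} z \<and> continuous_on {0..T} q \<and>
     (\<forall>t\<in>{0..T}. ((\<lambda>s. A *v zi s + B *v \<nu> s + G *v z s + \<gamma> *\<^sub>R q s) has_integral zi t) {0..t}) \<and>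
     (\<forall>t\<in>{0..T}. ((\<lambda>s. (A + G) *v z s + \<gamma> *\<^sub>R q s) has_integral z t) {0..t}) \<and>
     (\<forall>t\<in>{0..T}. ((\<lambda>s. transpose (A + G) *v q s
                        + transpose (mat 1 - \<Gamma>) *v (Q *v (zi s - \<Gamma> *v z s)))
                    has_integral (q t - H *v zi T)) {t..T})"

end

theory Submission
  imports Defs
begin

(*
  Both claims reduce to one fact: under (H1) the homogeneous Hamiltonian system
    w' = (A+G) w + gamma p,   p' = -(A+G)^T p - (I-Gamma)^T Q (w - Gamma w),
    w(0) = 0,   p(T) = H w(T)
  has only the trivial solution. Indeed d/dt (p . w) is exactly the integrand of the second
  variation at the control g = gamma p, so integrating and using the boundary conditions gives
  J''(gamma p) = 0, whence p = 0 by (H1), and then w = 0.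

  Uniqueness: for the difference of two solutions, zi - z solves y' = A y, y(0) = 0, so zi = z
  and the difference is a solution of the homogeneous system. Existence: after subtracting the
  solution d of d' = A d + B nu, d(0) = 0, the pair (z, q) solves the Hamiltonian system with a
  continuous forcing term; shooting on q(0) gives a linear map R^n -> R^n which is injective by
  the fact above, hence surjective, so the terminal condition can be met. Linear ODEs are solved
  with the operator exponential.
*)

(* The library does not make 'a \<Rightarrow>\<^sub>L 'a an algebra; this copy does, with composition as
   multiplication, so that exp is available on it. *)
typedef (overloaded) ('a::euclidean_space) bop = "UNIV :: ('a \<Rightarrow>\<^sub>L 'a) set"
  morphisms bop_rep bop_abs by simp

setup_lifting type_definition_bop

instantiation bop :: (euclidean_space) real_normed_algebra_1
begin

lift_definition norm_bop :: "'a bop \<Rightarrow> real" is norm .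
lift_definition minus_bop :: "'a bop \<Rightarrow> 'a bop \<Rightarrow> 'a bop" is "(-)" .
lift_definition plus_bop :: "'a bop \<Rightarrow> 'a bop \<Rightarrow> 'a bop" is "(+)" .
lift_definition uminus_bop :: "'a bop \<Rightarrow> 'a bop" is uminus .
lift_definition zero_bop :: "'a bop" is 0 .
lift_definition scaleR_bop :: "real \<Rightarrow> 'a bop \<Rightarrow> 'a bop" is scaleR .
lift_definition times_bop :: "'a bop \<Rightarrow> 'a bop \<Rightarrow> 'a bop" is blinfun_compose .
lift_definition one_bop :: "'a bop" is id_blinfun .

definition dist_bop :: "'a bop \<Rightarrow> 'a bop \<Rightarrow> real"
  where "dist_bop a b = norm (a - b)"

definition uniformity_bop :: "('a bop \<times> 'a bop) filter"
  where "uniformity_bop = (INF e\<in>{0 <..}. principal {(x, y). dist x y < e})"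

definition open_bop :: "'a bop set \<Rightarrow> bool"
  where "open_bop S = (\<forall>x\<in>S. \<forall>\<^sub>F (x', y) in uniformity. x' = x \<longrightarrow> y \<in> S)"

definition sgn_bop :: "'a bop \<Rightarrow> 'a bop"
  where "sgn_bop x = inverse (norm x) *\<^sub>R x"

instance
proof
  show "dist x y = norm (x - y)" for x y :: "'a bop" by (simp add: dist_bop_def)
  show "sgn x = inverse (norm x) *\<^sub>R x" for x :: "'a bop" by (simp add: sgn_bop_def)
  show "(uniformity :: ('a bop \<times> 'a bop) filter) = (INF e\<in>{0 <..}. principal {(x, y). dist x y < e})"
    by (simp add: uniformity_bop_def)
  show "open U = (\<forall>x\<in>U. \<forall>\<^sub>F (x', y) in uniformity. x' = x \<longrightarrow> y \<in> U)" for U :: "'a bop set"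
    by (simp add: open_bop_def)
  show "0 \<noteq> (1::'a bop)"
    by transfer (metis norm_blinfun_id norm_zero zero_neq_one)
qed (transfer; auto simp: algebra_simps scaleR_add_right scaleR_add_left norm_triangle_ineq
       norm_blinfun_compose intro!: blinfun_eqI simp: blinfun.bilinear_simps)+

end

instance bop :: (euclidean_space) banach
proof
  fix X :: "nat \<Rightarrow> 'a bop"
  assume "Cauchy X"
  have dist_rep: "dist x y = dist (bop_rep x) (bop_rep y)" for x y :: "'a bop"
    by (simp add: dist_norm norm_bop.rep_eq minus_bop.rep_eq)
  from \<open>Cauchy X\<close> have "Cauchy (bop_rep \<circ> X)"
    by (simp add: Cauchy_def dist_rep)
  then obtain L where "(bop_rep \<circ> X) \<longlonglongrightarrow> L"
    using Cauchy_convergent convergent_def by blast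
  then have "X \<longlonglongrightarrow> bop_abs L"
    by (simp add: tendsto_iff dist_rep bop_abs_inverse)
  then show "convergent X"
    by (auto simp: convergent_def)
qed

definition bapp :: "'a::euclidean_space bop \<Rightarrow> 'a \<Rightarrow> 'a"
  where "bapp X v = blinfun_apply (bop_rep X) v"

definition bop_of :: "('a::euclidean_space \<Rightarrow> 'a) \<Rightarrow> 'a bop"
  where "bop_of f = bop_abs (Blinfun f)"

lemma bapp_mult: "bapp (X * Y) v = bapp X (bapp Y v)"
  by (simp add: bapp_def times_bop.rep_eq)

lemma bapp_one [simp]: "bapp 1 v = v"
  by (simp add: bapp_def one_bop.rep_eq)

lemma bapp_bop_of: "bounded_linear f \<Longrightarrow> bapp (bop_of f) v = f v"
  by (simp add: bapp_def bop_of_def bop_abs_inverse bounded_linear_Blinfun_apply)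

lemma bapp_bop_of_matrix [simp]: "bapp (bop_of ((*v) M)) v = M *v v" for M :: "real^'n^'n"
  by (rule bapp_bop_of[OF matrix_vector_mul_bounded_linear])

lemma bounded_bilinear_bapp: "bounded_bilinear bapp"
proof
  fix a a' :: "'a::euclidean_space bop" and b b' :: 'a and r :: real
  show "bapp (a + a') b = bapp a b + bapp a' b"
    by (simp add: bapp_def plus_bop.rep_eq blinfun.add_left)
  show "bapp a (b + b') = bapp a b + bapp a b'"
    by (simp add: bapp_def blinfun.add_right)
  show "bapp (r *\<^sub>R a) b = r *\<^sub>R bapp a b"
    by (simp add: bapp_def scaleR_bop.rep_eq blinfun.scaleR_left)
  show "bapp a (r *\<^sub>R b) = r *\<^sub>R bapp a b"
    by (simp add: bapp_def blinfun.scaleR_right)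
  show "\<exists>K. \<forall>a b. norm (bapp a b) \<le> norm a * norm b * K"
    by (rule exI[of _ 1]) (simp add: bapp_def norm_bop.rep_eq norm_blinfun)
qed

interpretation bapp: bounded_bilinear bapp
  by (rule bounded_bilinear_bapp)

section \<open>Linear differential equations\<close>

lemma linear_ode_variation_of_constants:
  fixes L :: "'a::euclidean_space bop" and y0 :: 'a
  assumes F: "continuous_on {0..T} F" and t: "t \<in> {0..T}"
  defines "Y \<equiv> \<lambda>t. bapp (exp (t *\<^sub>R L)) (y0 + integral {0..t} (\<lambda>s. bapp (exp (s *\<^sub>R (- L))) (F s)))"
  shows "(Y has_vector_derivative bapp L (Y t) + F t) (at t within {0..T})"
proof -
  have "continuous_on {0..T} (\<lambda>s. exp (s *\<^sub>R (- L)))"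
    by (rule continuous_on_vector_derivative[OF exp_scaleR_has_vector_derivative_right])
  then have "continuous_on {0..T} (\<lambda>s. bapp (exp (s *\<^sub>R (- L))) (F s))"
    by (intro bapp.continuous_on F)
  from integral_has_vector_derivative[OF this t]
  have "((\<lambda>t. y0 + integral {0..t} (\<lambda>s. bapp (exp (s *\<^sub>R (- L))) (F s))) has_vector_derivative
      bapp (exp (t *\<^sub>R (- L))) (F t)) (at t within {0..T})"
    using has_vector_derivative_add[OF has_vector_derivative_const] by fastforce
  from bapp.has_vector_derivative[OF exp_scaleR_has_vector_derivative_right[of L] this]
  show ?thesis
    unfolding Y_def
    by (simp add: bapp_mult[symmetric] exp_minus_inverse exp_times_scaleR_commute add.commute)
qed

lemma linear_ode_unique:
  fixes L :: "'a::euclidean_space bop" and Y :: "real \<Rightarrow> 'a"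
  assumes D: "\<And>t. t \<in> {0..T} \<Longrightarrow> (Y has_vector_derivative bapp L (Y t)) (at t within {0..T})"
    and Y0: "Y 0 = 0" and t: "t \<in> {0..T}"
  shows "Y t = 0"
proof -
  define W where "W = (\<lambda>t. bapp (exp (t *\<^sub>R (- L))) (Y t))"
  have "(W has_derivative (\<lambda>h. 0)) (at s within {0..T})" if s: "s \<in> {0..T}" for s
    using bapp.has_vector_derivative[OF exp_scaleR_has_vector_derivative_right[of "- L"] D[OF s]]
    by (simp add: W_def has_vector_derivative_def bapp_mult[symmetric] bapp.minus_left)
  then obtain c where "\<forall>s\<in>{0..T}. W s = c"
    using has_derivative_zero_constant[of "{0..T}" W] by auto
  with t have "W t = W 0"
    by auto
  then have "bapp (exp (t *\<^sub>R L)) (W t) = 0"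
    by (simp add: W_def Y0 bapp.zero_right)
  then show ?thesis
    by (simp add: W_def bapp_mult[symmetric] exp_minus_inverse)
qed

lemma exp_scaleR_has_vector_derivative_apply:
  fixes L :: "'a::euclidean_space bop"
  shows "((\<lambda>t. bapp (exp (t *\<^sub>R L)) y) has_vector_derivative bapp L (bapp (exp (t *\<^sub>R L)) y)) (at t within S)"
  using bapp.has_vector_derivative[OF exp_scaleR_has_vector_derivative_right[of L] has_vector_derivative_const[of y]]
  by (simp add: bapp_mult[symmetric] exp_times_scaleR_commute bapp.zero_right)

lemma has_integral_singleton_eq_0: "(f has_integral y) {a..a::real} \<Longrightarrow> y = 0"
  using has_integral_unique[OF _ has_integral_refl(2)] by simp

lemma continuous_on_matrix_vector_mult [continuous_intros]:
  "continuous_on S f \<Longrightarrow> continuous_on S (\<lambda>x. (M::real^'n^'m) *v f x)"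
  by (rule bounded_linear.continuous_on[OF matrix_vector_mul_bounded_linear])

lemma has_vector_derivative_of_has_integral_from_left:
  fixes f y :: "real \<Rightarrow> 'a::banach"
  assumes f: "continuous_on {a..b} f" and y: "\<forall>t\<in>{a..b}. (f has_integral y t) {a..t}"
    and t: "t \<in> {a..b}"
  shows "(y has_vector_derivative f t) (at t within {a..b})"
proof (rule has_vector_derivative_transform[OF t _ integral_has_vector_derivative[OF f t]])
  show "y s = integral {a..s} f" if "s \<in> {a..b}" for s
    using y that by (metis integral_unique)
qed

lemma has_vector_derivative_of_has_integral_from_right:
  fixes f y :: "real \<Rightarrow> 'a::banach"
  assumes f: "continuous_on {a..b} f" and y: "\<forall>t\<in>{a..b}. (f has_integral (y t - k)) {t..b}"
    and t: "t \<in> {a..b}"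
  shows "(y has_vector_derivative - f t) (at t within {a..b})"
proof (rule has_vector_derivative_transform[OF t])
  show "y s = k + integral {a..b} f - integral {a..s} f" if s: "s \<in> {a..b}" for s
  proof -
    have "integral {a..s} f + integral {s..b} f = integral {a..b} f"
      using s integrable_continuous_real[OF f]
      by (intro Henstock_Kurzweil_Integration.integral_combine) auto
    moreover have "integral {s..b} f = y s - k"
      using y s by (blast intro: integral_unique)
    ultimately show ?thesis
      by (simp add: algebra_simps)
  qed
  show "((\<lambda>s. k + integral {a..b} f - integral {a..s} f) has_vector_derivative - f t) (at t within {a..b})"
    using has_vector_derivative_diff[OF has_vector_derivative_const integral_has_vector_derivative[OF f t]]
    by simp
qed

lemma has_integral_of_vector_derivative_on_subinterval:
  fixes f y :: "real \<Rightarrow> 'a::banach"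
  assumes "\<And>t. t \<in> {a..b} \<Longrightarrow> (y has_vector_derivative f t) (at t within {a..b})"
    and "c \<le> d" and "{c..d} \<subseteq> {a..b}"
  shows "(f has_integral (y d - y c)) {c..d}"
  using assms(2,3)
  by (intro fundamental_theorem_of_calculus)
    (auto intro!: has_vector_derivative_within_subset[OF assms(1)])

lemma L2_on_integrable:
  fixes g :: "real \<Rightarrow> 'a::euclidean_space"
  assumes "L2_on T g"
  shows "g integrable_on {0..T}"
proof -
  have g: "set_borel_measurable lborel {0..T} g"
    and g2: "set_integrable lborel {0..T} (\<lambda>t. (norm (g t))\<^sup>2)"
    using assms unfolding L2_on_def by auto
  have bound: "set_integrable lborel {0..T} (\<lambda>t. 1 + (norm (g t))\<^sup>2)"
    by (rule set_integral_add(1)[OF borel_integrable_atLeastAtMost'[OF continuous_on_const] g2])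
  have "norm (g t) \<le> norm (1 + (norm (g t))\<^sup>2)" for t
  proof -
    have "norm (g t) \<le> 1 + (norm (g t))\<^sup>2"
      by (meson add_increasing add_increasing2 nle_le pos2 self_le_power zero_le_one zero_le_power2)
    then show ?thesis
      by simp
  qed
  then have "set_integrable lborel {0..T} g"
    by (intro set_integrable_bound[OF bound g] AE_I2 impI)
  then show ?thesis
    by (rule set_borel_integral_eq_integral(1))
qed

lemma continuous_on_imp_L2_on:
  fixes g :: "real \<Rightarrow> 'a::euclidean_space"
  assumes "continuous_on {0..T} g"
  shows "L2_on T g"
  unfolding L2_on_def set_borel_measurable_def
  using borel_measurable_continuous_on_indicator[OF _ assms]
  by (auto intro!: borel_integrable_atLeastAtMost' continuous_intros assms)

lemma L2_norm_sq_continuous: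
  fixes g :: "real \<Rightarrow> 'a::euclidean_space"
  assumes "continuous_on {0..T} g"
  shows "L2_norm_sq T g = integral {0..T} (\<lambda>t. (norm (g t))\<^sup>2)"
  unfolding L2_norm_sq_def
  by (intro set_borel_integral_eq_integral(2) borel_integrable_atLeastAtMost' continuous_intros assms)

lemma integral_linear_ode_exists:
  fixes L :: "'a::euclidean_space bop" and f :: "real \<Rightarrow> 'a"
  assumes f: "f integrable_on {0..T}"
  obtains d where "continuous_on {0..T} d"
    and "\<forall>t\<in>{0..T}. ((\<lambda>s. bapp L (d s) + f s) has_integral d t) {0..t}"
proof
  define u where "u t = integral {0..t} f" for t
  have u: "continuous_on {0..T} u"
    unfolding u_def by (rule indefinite_integral_continuous_1[OF f])
  \<comment> \<open>Only the primitive u of f is continuous, so solve e' = L e + L u and put d = u + e.\<close>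
  define e where "e t = bapp (exp (t *\<^sub>R L)) (0 + integral {0..t} (\<lambda>s. bapp (exp (s *\<^sub>R (- L))) (bapp L (u s))))" for t
  have e': "(e has_vector_derivative bapp L (e t) + bapp L (u t)) (at t within {0..T})"
    if "t \<in> {0..T}" for t
    unfolding e_def[abs_def]
    by (rule linear_ode_variation_of_constants[OF bapp.continuous_on[OF continuous_on_const u] that])
  show "continuous_on {0..T} (\<lambda>t. u t + e t)"
    using u continuous_on_vector_derivative[OF e'] by (intro continuous_intros)
  show "\<forall>t\<in>{0..T}. ((\<lambda>s. bapp L (u s + e s) + f s) has_integral (u t + e t)) {0..t}"
  proof
    fix t assume t: "t \<in> {0..T}"
    have "(f has_integral u t) {0..t}"
      unfolding u_def using t by (intro integrable_integral integrable_on_subinterval[OF f]) auto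
    with t have "((\<lambda>s. (bapp L (e s) + bapp L (u s)) + f s) has_integral (e t - e 0 + u t)) {0..t}"
      by (intro has_integral_add has_integral_of_vector_derivative_on_subinterval[OF e']) auto
    then show "((\<lambda>s. bapp L (u s + e s) + f s) has_integral (u t + e t)) {0..t}"
      by (simp add: e_def bapp.add_right algebra_simps)
  qed
qed

section \<open>The homogeneous Hamiltonian system\<close>

definition hamiltonian_field :: "real^'n^'n \<Rightarrow> real^'n^'n \<Rightarrow> real^'n^'n \<Rightarrow> real^'n^'n \<Rightarrow> real
    \<Rightarrow> (real^'n) \<times> (real^'n) \<Rightarrow> (real^'n) \<times> (real^'n)" where
  "hamiltonian_field A G \<Gamma> Q \<gamma> Y = ((A + G) *v fst Y + \<gamma> *\<^sub>R snd Y,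
     - (transpose (A + G) *v snd Y + transpose (mat 1 - \<Gamma>) *v (Q *v (fst Y - \<Gamma> *v fst Y))))"

lemma bounded_linear_hamiltonian_field: "bounded_linear (hamiltonian_field A G \<Gamma> Q \<gamma>)"
  unfolding linear_conv_bounded_linear[symmetric] linear_iff hamiltonian_field_def
  by (auto simp: algebra_simps)

lemma bapp_hamiltonian_field [simp]:
  "bapp (bop_of (hamiltonian_field A G \<Gamma> Q \<gamma>)) Y = hamiltonian_field A G \<Gamma> Q \<gamma> Y"
  by (rule bapp_bop_of[OF bounded_linear_hamiltonian_field])

lemma hamiltonian_energy_identity:
  fixes A G \<Gamma> Q :: "real^'n^'n" and w p :: "real^'n"
  assumes "\<gamma> > 0"
  shows "p \<bullet> ((A + G) *v w + \<gamma> *\<^sub>R p)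
           + - (transpose (A + G) *v p + transpose (mat 1 - \<Gamma>) *v (Q *v (w - \<Gamma> *v w))) \<bullet> w
         = - (w \<bullet> (Qhat \<Gamma> Q *v w)) + (1 / \<gamma>) * (norm (\<gamma> *\<^sub>R p))\<^sup>2"
proof -
  have "Qhat \<Gamma> Q *v w = transpose (mat 1 - \<Gamma>) *v (Q *v (w - \<Gamma> *v w))"
    by (simp add: Qhat_def matrix_vector_mul_assoc[symmetric] matrix_vector_mult_diff_rdistrib)
  moreover have "(1 / \<gamma>) * (norm (\<gamma> *\<^sub>R p))\<^sup>2 = \<gamma> * (p \<bullet> p)"
    using assms by (simp add: power2_norm_eq_inner[symmetric] power2_eq_square)
  ultimately show ?thesis
    by (simp add: inner_add_left inner_add_right inner_diff_left dot_lmul_matrix inner_commute[of w])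
qed

lemma Jpp_along_hamiltonian_eq_0:
  fixes A G \<Gamma> Q H :: "real^'n^'n" and w p :: "real \<Rightarrow> real^'n"
  assumes "T \<ge> 0" and "\<gamma> > 0"
    and w': "\<And>t. t \<in> {0..T} \<Longrightarrow> (w has_vector_derivative (A + G) *v w t + \<gamma> *\<^sub>R p t) (at t within {0..T})"
    and p': "\<And>t. t \<in> {0..T} \<Longrightarrow> (p has_vector_derivative
       - (transpose (A + G) *v p t + transpose (mat 1 - \<Gamma>) *v (Q *v (w t - \<Gamma> *v w t)))) (at t within {0..T})"
    and "w 0 = 0" and "p T = H *v w T"
  shows "Jpp \<Gamma> Q H \<gamma> T (\<lambda>t. \<gamma> *\<^sub>R p t) w = 0"
proof -
  define j where "j t = - (w t \<bullet> (Qhat \<Gamma> Q *v w t)) + (1 / \<gamma>) * (norm (\<gamma> *\<^sub>R p t))\<^sup>2" for t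
  have "((\<lambda>t. p t \<bullet> w t) has_vector_derivative j t) (at t within {0..T})" if "t \<in> {0..T}" for t
    using bounded_bilinear.has_vector_derivative[OF bounded_bilinear_inner p'[OF that] w'[OF that]]
    unfolding hamiltonian_energy_identity[OF \<open>\<gamma> > 0\<close>] j_def .
  from has_integral_of_vector_derivative_on_subinterval[OF this assms(1) order_refl]
  have "integral {0..T} j = w T \<bullet> (H *v w T)"
    using assms by (simp add: integral_unique inner_commute)
  moreover have "continuous_on {0..T} j"
    unfolding j_def
    using continuous_on_vector_derivative[OF w'] continuous_on_vector_derivative[OF p']
    by (intro continuous_intros)
  then have "(LINT t:{0..T}|lborel. j t) = integral {0..T} j"
    by (intro set_borel_integral_eq_integral(2) borel_integrable_atLeastAtMost')
  ultimately show ?thesis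
    unfolding Jpp_def j_def[symmetric] by simp
qed

lemma H1_hamiltonian_trivial:
  fixes A G \<Gamma> Q H :: "real^'n^'n" and w p :: "real \<Rightarrow> real^'n"
  assumes "T > 0" and "\<gamma> > 0" and "H1 A G \<Gamma> Q H \<gamma> T"
    and w': "\<And>t. t \<in> {0..T} \<Longrightarrow> (w has_vector_derivative (A + G) *v w t + \<gamma> *\<^sub>R p t) (at t within {0..T})"
    and p': "\<And>t. t \<in> {0..T} \<Longrightarrow> (p has_vector_derivative
       - (transpose (A + G) *v p t + transpose (mat 1 - \<Gamma>) *v (Q *v (w t - \<Gamma> *v w t)))) (at t within {0..T})"
    and w0: "w 0 = 0" and "p T = H *v w T"
    and t: "t \<in> {0..T}"
  shows "w t = 0 \<and> p t = 0"
proof -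
  obtain \<epsilon> where "\<epsilon> > 0" and H1: "\<And>g z. L2_on T g \<Longrightarrow> state_sol A G T g z \<Longrightarrow>
      Jpp \<Gamma> Q H \<gamma> T g z \<ge> \<epsilon> * L2_norm_sq T g"
    using assms(3) unfolding H1_def by blast
  define g where "g t = \<gamma> *\<^sub>R p t" for t
  define f where "f t = (norm (g t))\<^sup>2" for t
  have g: "continuous_on {0..T} g"
    unfolding g_def using continuous_on_vector_derivative[OF p'] by (intro continuous_intros)
  then have f: "continuous_on {0..T} f"
    unfolding f_def by (intro continuous_intros)
  have "((\<lambda>s. (A + G) *v w s + g s) has_integral w t) {0..t}" if "t \<in> {0..T}" for t
    using has_integral_of_vector_derivative_on_subinterval[OF w', of 0 t] that w0
    by (simp add: g_def)
  then have "state_sol A G T g w"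
    unfolding state_sol_def using continuous_on_vector_derivative[OF w'] by blast
  with H1 continuous_on_imp_L2_on[OF g] have "Jpp \<Gamma> Q H \<gamma> T g w \<ge> \<epsilon> * L2_norm_sq T g"
    by blast
  then have "Jpp \<Gamma> Q H \<gamma> T g w \<ge> \<epsilon> * integral {0..T} f"
    by (simp add: L2_norm_sq_continuous[OF g] f_def[abs_def])
  moreover have "Jpp \<Gamma> Q H \<gamma> T g w = 0"
    unfolding g_def[abs_def] using assms(1,2,7) by (intro Jpp_along_hamiltonian_eq_0[OF _ _ w' p' w0]) auto
  moreover have "integral {0..T} f \<ge> 0"
    by (intro integral_nonneg integrable_continuous_real f) (simp add: f_def)
  ultimately have "integral {0..T} f = 0"
    using \<open>\<epsilon> > 0\<close> by (simp add: mult_le_0_iff)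
  then have "(f has_integral 0) (cbox 0 T)"
    using integrable_continuous_real[OF f] by (metis cbox_interval has_integral_integral)
  then have p0: "p s = 0" if "s \<in> {0..T}" for s
    using has_integral_0_cbox_imp_0[of 0 T f s] f that \<open>T > 0\<close> \<open>\<gamma> > 0\<close>
    by (simp add: f_def g_def)
  have "w t = 0"
  proof (rule linear_ode_unique[where L = "bop_of ((*v) (A + G))"])
    show "(w has_vector_derivative bapp (bop_of ((*v) (A + G))) (w s)) (at s within {0..T})"
      if "s \<in> {0..T}" for s
      using w'[OF that] p0[OF that] by simp
  qed (use w0 t in auto)
  with p0 t show ?thesis
    by blast
qed

lemma hamiltonian_shooting_surj:
  fixes A G \<Gamma> Q H :: "real^'n^'n"
  assumes "T > 0" and "\<gamma> > 0" and "H1 A G \<Gamma> Q H \<gamma> T"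
  defines "E \<equiv> \<lambda>p t. bapp (exp (t *\<^sub>R bop_of (hamiltonian_field A G \<Gamma> Q \<gamma>))) (0, p)"
  shows "surj (\<lambda>p. snd (E p T) - H *v fst (E p T))"
proof (rule linear_inj_imp_surj)
  show lin: "linear (\<lambda>p. snd (E p T) - H *v fst (E p T))"
  proof (rule linearI)
    have "(0, x + y) = (0, x) + (0::real^'n, y)" "(0, c *\<^sub>R x) = c *\<^sub>R (0::real^'n, x)" for x y :: "real^'n" and c
      by simp_all
    then show "snd (E (x + y) T) - H *v fst (E (x + y) T)
        = snd (E x T) - H *v fst (E x T) + (snd (E y T) - H *v fst (E y T))"
      and "snd (E (c *\<^sub>R x) T) - H *v fst (E (c *\<^sub>R x) T) = c *\<^sub>R (snd (E x T) - H *v fst (E x T))"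
      for x y c
      by (simp_all only: E_def bapp.add_right bapp.scaleR_right)
        (simp_all add: algebra_simps matrix_vector_right_distrib)
  qed
  show "inj (\<lambda>p. snd (E p T) - H *v fst (E p T))"
    unfolding linear_inj_iff_eq_0[OF lin]
  proof (intro allI impI)
    fix p assume boundary: "snd (E p T) - H *v fst (E p T) = 0"
    have E': "(E p has_vector_derivative hamiltonian_field A G \<Gamma> Q \<gamma> (E p t)) (at t within {0..T})" for t
      using exp_scaleR_has_vector_derivative_apply[of "bop_of (hamiltonian_field A G \<Gamma> Q \<gamma>)" "(0, p)"]
      by (simp add: E_def)
    have "fst (E p 0) = 0 \<and> snd (E p 0) = 0"
    proof (rule H1_hamiltonian_trivial[OF assms(1-3)])
      show "((\<lambda>t. fst (E p t)) has_vector_derivative (A + G) *v fst (E p t) + \<gamma> *\<^sub>R snd (E p t)) (at t within {0..T})"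
        and "((\<lambda>t. snd (E p t)) has_vector_derivative - (transpose (A + G) *v snd (E p t)
          + transpose (mat 1 - \<Gamma>) *v (Q *v (fst (E p t) - \<Gamma> *v fst (E p t))))) (at t within {0..T})" for t
        using bounded_linear.has_vector_derivative[OF bounded_linear_fst E'] bounded_linear.has_vector_derivative[OF bounded_linear_snd E']
        by (simp_all add: hamiltonian_field_def)
    qed (use boundary \<open>T > 0\<close> in \<open>simp_all add: E_def\<close>)
    then show "p = 0"
      by (simp add: E_def)
  qed
qed

section \<open>The boundary value problem\<close>

lemma bvp_sol_diff:
  assumes "bvp_sol A B G \<Gamma> Q H \<gamma> T \<nu> zi z q" and "bvp_sol A B G \<Gamma> Q H \<gamma> T \<nu>' zi' z' q'"
  shows "bvp_sol A B G \<Gamma> Q H \<gamma> T (\<lambda>t. \<nu> t - \<nu>' t)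
    (\<lambda>t. zi t - zi' t) (\<lambda>t. z t - z' t) (\<lambda>t. q t - q' t)"
proof -
  note S = assms[unfolded bvp_sol_def]
  note zi = S[THEN conjunct2, THEN conjunct2, THEN conjunct2, THEN conjunct1, rule_format]
  note z = S[THEN conjunct2, THEN conjunct2, THEN conjunct2, THEN conjunct2, THEN conjunct1, rule_format]
  note q = S[THEN conjunct2, THEN conjunct2, THEN conjunct2, THEN conjunct2, THEN conjunct2, rule_format]
  show ?thesis
    unfolding bvp_sol_def
  proof (intro conjI ballI)
    show "continuous_on {0..T} (\<lambda>t. zi t - zi' t)" "continuous_on {0..T} (\<lambda>t. z t - z' t)"
      "continuous_on {0..T} (\<lambda>t. q t - q' t)"
      using S by (auto intro: continuous_on_diff)
  next
    fix t assume t: "t \<in> {0..T}"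
    from has_integral_diff[OF zi(1)[OF t] zi(2)[OF t]]
    show "((\<lambda>s. A *v (zi s - zi' s) + B *v (\<nu> s - \<nu>' s) + G *v (z s - z' s) + \<gamma> *\<^sub>R (q s - q' s))
        has_integral zi t - zi' t) {0..t}"
      by (simp add: algebra_simps matrix_vector_right_distrib)
    from has_integral_diff[OF z(1)[OF t] z(2)[OF t]]
    show "((\<lambda>s. (A + G) *v (z s - z' s) + \<gamma> *\<^sub>R (q s - q' s)) has_integral z t - z' t) {0..t}"
      by (simp add: algebra_simps matrix_vector_right_distrib)
    from has_integral_diff[OF q(1)[OF t] q(2)[OF t]]
    show "((\<lambda>s. transpose (A + G) *v (q s - q' s)
          + transpose (mat 1 - \<Gamma>) *v (Q *v (zi s - zi' s - \<Gamma> *v (z s - z' s))))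
        has_integral (q t - q' t) - H *v (zi T - zi' T)) {t..T}"
      by (simp add: algebra_simps matrix_vector_right_distrib)
  qed
qed

lemma bvp_sol_unforced_trivial:
  fixes A G \<Gamma> Q H :: "real^'n^'n" and B :: "real^'n1^'n"
  assumes "T > 0" and "\<gamma> > 0" and "H1 A G \<Gamma> Q H \<gamma> T"
    and S: "bvp_sol A B G \<Gamma> Q H \<gamma> T (\<lambda>_. 0) zi z q" and t: "t \<in> {0..T}"
  shows "zi t = 0 \<and> z t = 0 \<and> q t = 0"
proof -
  have ends: "0 \<in> {0..T}" "T \<in> {0..T}"
    using \<open>T > 0\<close> by auto
  note S = S[unfolded bvp_sol_def matrix_vector_mult_0_right add_0_right]
  have cont: "continuous_on {0..T} zi" "continuous_on {0..T} z" "continuous_on {0..T} q"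
    using S by auto
  have zi': "(zi has_vector_derivative A *v zi s + G *v z s + \<gamma> *\<^sub>R q s) (at s within {0..T})"
    if "s \<in> {0..T}" for s
    using S by (intro has_vector_derivative_of_has_integral_from_left that continuous_intros cont) blast
  have z': "(z has_vector_derivative (A + G) *v z s + \<gamma> *\<^sub>R q s) (at s within {0..T})"
    if "s \<in> {0..T}" for s
    using S by (intro has_vector_derivative_of_has_integral_from_left that continuous_intros cont) blast
  have q': "(q has_vector_derivative
       - (transpose (A + G) *v q s + transpose (mat 1 - \<Gamma>) *v (Q *v (zi s - \<Gamma> *v z s)))) (at s within {0..T})"
    if "s \<in> {0..T}" for s
    using S by (intro has_vector_derivative_of_has_integral_from_right that continuous_intros cont) blast
  have "zi 0 = 0" "z 0 = 0"
    using S ends by (auto dest!: has_integral_singleton_eq_0)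
  have "q T - H *v zi T = 0"
    using S ends(2) by (meson has_integral_singleton_eq_0)
  then have "q T = H *v zi T"
    by simp
  have zi_eq_z: "zi s = z s" if "s \<in> {0..T}" for s
  proof -
    have "(\<lambda>s. zi s - z s) s = 0"
    proof (rule linear_ode_unique[where L = "bop_of ((*v) A)"])
      show "((\<lambda>s. zi s - z s) has_vector_derivative bapp (bop_of ((*v) A)) (zi s - z s)) (at s within {0..T})"
        if "s \<in> {0..T}" for s
        using has_vector_derivative_diff[OF zi'[OF that] z'[OF that]]
        by (simp add: algebra_simps matrix_vector_right_distrib)
    qed (use \<open>zi 0 = 0\<close> \<open>z 0 = 0\<close> that in auto)
    then show ?thesis
      by simp
  qed
  have "z t = 0 \<and> q t = 0"
    using \<open>T > 0\<close> \<open>\<gamma> > 0\<close> \<open>H1 A G \<Gamma> Q H \<gamma> T\<close> z' \<open>z 0 = 0\<close> t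
      q'[unfolded zi_eq_z] \<open>q T = H *v zi T\<close>[unfolded zi_eq_z[OF ends(2)]]
    by (intro H1_hamiltonian_trivial) (auto simp: zi_eq_z)
  with zi_eq_z[OF t] show ?thesis
    by simp
qed

lemma bvp_sol_of_hamiltonian_trajectory:
  fixes A G \<Gamma> Q H :: "real^'n^'n" and B :: "real^'n1^'n"
    and d :: "real \<Rightarrow> real^'n" and Y :: "real \<Rightarrow> (real^'n) \<times> (real^'n)"
  assumes d: "continuous_on {0..T} d"
    and d_int: "\<forall>t\<in>{0..T}. ((\<lambda>s. A *v d s + B *v \<nu> s) has_integral d t) {0..t}"
    and Y': "\<And>t. t \<in> {0..T} \<Longrightarrow> (Y has_vector_derivative
       hamiltonian_field A G \<Gamma> Q \<gamma> (Y t) + (0, - (transpose (mat 1 - \<Gamma>) *v (Q *v d t)))) (at t within {0..T})"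
    and Y0: "fst (Y 0) = 0" and YT: "snd (Y T) = H *v (fst (Y T) + d T)"
  shows "bvp_sol A B G \<Gamma> Q H \<gamma> T \<nu> (\<lambda>t. fst (Y t) + d t) (\<lambda>t. fst (Y t)) (\<lambda>t. snd (Y t))"
proof -
  define z where "z t = fst (Y t)" for t
  define q where "q t = snd (Y t)" for t
  have z': "(z has_vector_derivative (A + G) *v z t + \<gamma> *\<^sub>R q t) (at t within {0..T})"
    if "t \<in> {0..T}" for t
    using bounded_linear.has_vector_derivative[OF bounded_linear_fst Y'[OF that]]
    by (simp add: z_def[abs_def] q_def hamiltonian_field_def)
  have q': "(q has_vector_derivative
       - (transpose (A + G) *v q t + transpose (mat 1 - \<Gamma>) *v (Q *v ((z t + d t) - \<Gamma> *v z t))))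
       (at t within {0..T})"
    if "t \<in> {0..T}" for t
    using bounded_linear.has_vector_derivative[OF bounded_linear_snd Y'[OF that]]
    by (simp add: z_def q_def[abs_def] hamiltonian_field_def algebra_simps matrix_vector_right_distrib)
  have "bvp_sol A B G \<Gamma> Q H \<gamma> T \<nu> (\<lambda>t. z t + d t) z q"
    unfolding bvp_sol_def
  proof (intro conjI ballI)
    show "continuous_on {0..T} (\<lambda>t. z t + d t)" "continuous_on {0..T} z" "continuous_on {0..T} q"
      using continuous_on_vector_derivative[OF z'] continuous_on_vector_derivative[OF q'] d
      by (auto intro: continuous_on_add)
  next
    fix t assume t: "t \<in> {0..T}"
    show z_int: "((\<lambda>s. (A + G) *v z s + \<gamma> *\<^sub>R q s) has_integral z t) {0..t}"
      using has_integral_of_vector_derivative_on_subinterval[OF z', of 0 t] t Y0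
      by (simp add: z_def)
    from has_integral_add[OF z_int d_int[rule_format, OF t]]
    show "((\<lambda>s. A *v (z s + d s) + B *v \<nu> s + G *v z s + \<gamma> *\<^sub>R q s) has_integral z t + d t) {0..t}"
      by (simp add: algebra_simps matrix_vector_right_distrib)
    from has_integral_neg[OF has_integral_of_vector_derivative_on_subinterval[OF q', of t T]] t
    show "((\<lambda>s. transpose (A + G) *v q s + transpose (mat 1 - \<Gamma>) *v (Q *v (z s + d s - \<Gamma> *v z s)))
        has_integral q t - H *v (z T + d T)) {t..T}"
      by (simp add: q_def z_def YT add.commute)
  qed
  then show ?thesis
    by (simp add: z_def[abs_def] q_def[abs_def])
qed

lemma bvp_sol_exists:
  fixes A G \<Gamma> Q H :: "real^'n^'n" and B :: "real^'n1^'n" and \<nu> :: "real \<Rightarrow> real^'n1"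
  assumes "T > 0" and "\<gamma> > 0" and "H1 A G \<Gamma> Q H \<gamma> T" and "L2_on T \<nu>"
  shows "\<exists>zi z q. bvp_sol A B G \<Gamma> Q H \<gamma> T \<nu> zi z q"
proof -
  have "(\<lambda>s. B *v \<nu> s) integrable_on {0..T}"
    using integrable_linear[OF L2_on_integrable[OF assms(4)] matrix_vector_mul_bounded_linear[of B]]
    by (simp add: o_def)
  from integral_linear_ode_exists[OF this, of "bop_of ((*v) A)"]
  obtain d where d: "continuous_on {0..T} d"
    and d_int: "\<forall>t\<in>{0..T}. ((\<lambda>s. A *v d s + B *v \<nu> s) has_integral d t) {0..t}"
    by (simp only: bapp_bop_of_matrix) blast
  define L where "L = bop_of (hamiltonian_field A G \<Gamma> Q \<gamma>)"
  define F where "F t = (0::real^'n, - (transpose (mat 1 - \<Gamma>) *v (Q *v d t)))" for t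
  define Y\<^sub>0 where "Y\<^sub>0 t = bapp (exp (t *\<^sub>R L)) (0 + integral {0..t} (\<lambda>s. bapp (exp (s *\<^sub>R (- L))) (F s)))" for t
  define E where "E p t = bapp (exp (t *\<^sub>R L)) (0, p)" for p t
  obtain p where p: "snd (E p T) - H *v fst (E p T) = H *v (fst (Y\<^sub>0 T) + d T) - snd (Y\<^sub>0 T)"
    using hamiltonian_shooting_surj[OF assms(1-3)] unfolding E_def L_def surj_def by metis
  define Y where "Y t = E p t + Y\<^sub>0 t" for t
  have Y': "(Y has_vector_derivative hamiltonian_field A G \<Gamma> Q \<gamma> (Y t) + F t) (at t within {0..T})"
    if "t \<in> {0..T}" for t
  proof -
    have "continuous_on {0..T} F"
      unfolding F_def by (intro continuous_intros d)
    have "(E p has_vector_derivative bapp L (E p t)) (at t within {0..T})"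
      unfolding E_def by (rule exp_scaleR_has_vector_derivative_apply)
    moreover have "(Y\<^sub>0 has_vector_derivative bapp L (Y\<^sub>0 t) + F t) (at t within {0..T})"
      unfolding Y\<^sub>0_def by (rule linear_ode_variation_of_constants[OF \<open>continuous_on {0..T} F\<close> that])
    ultimately have "(Y has_vector_derivative bapp L (E p t) + (bapp L (Y\<^sub>0 t) + F t)) (at t within {0..T})"
      unfolding Y_def by (rule has_vector_derivative_add)
    moreover have "bapp L (E p t) + (bapp L (Y\<^sub>0 t) + F t) = bapp L (Y t) + F t"
      by (simp add: Y_def bapp.add_right)
    ultimately have "(Y has_vector_derivative bapp L (Y t) + F t) (at t within {0..T})"
      by (simp only:)
    then show ?thesis
      by (simp add: L_def)
  qed
  have "fst (Y 0) = 0"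
    by (simp add: Y_def E_def Y\<^sub>0_def)
  moreover have "snd (Y T) = H *v (fst (Y T) + d T)"
    using p by (simp add: Y_def matrix_vector_right_distrib algebra_simps)
  ultimately have "bvp_sol A B G \<Gamma> Q H \<gamma> T \<nu> (\<lambda>t. fst (Y t) + d t) (\<lambda>t. fst (Y t)) (\<lambda>t. snd (Y t))"
    using Y' unfolding F_def by (intro bvp_sol_of_hamiltonian_trajectory[OF d d_int])
  then show ?thesis
    by blast
qed

lemma bvp_sol_unique:
  fixes A G \<Gamma> Q H :: "real^'n^'n" and B :: "real^'n1^'n"
  assumes "T > 0" and "\<gamma> > 0" and "H1 A G \<Gamma> Q H \<gamma> T"
    and "bvp_sol A B G \<Gamma> Q H \<gamma> T \<nu> zi z q" and "bvp_sol A B G \<Gamma> Q H \<gamma> T \<nu> zi' z' q'"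
    and t: "t \<in> {0..T}"
  shows "zi t = zi' t \<and> z t = z' t \<and> q t = q' t"
proof -
  from bvp_sol_diff[OF assms(4,5)]
  have "bvp_sol A B G \<Gamma> Q H \<gamma> T (\<lambda>_. 0) (\<lambda>t. zi t - zi' t) (\<lambda>t. z t - z' t) (\<lambda>t. q t - q' t)"
    by simp
  from bvp_sol_unforced_trivial[OF assms(1-3) this t]
  show ?thesis
    by simp
qed

theorem lemma5:
  fixes A G \<Gamma> Q H :: "real^'n^'n" and B :: "real^'n1^'n" and \<gamma> T :: real
    and \<nu> :: "real \<Rightarrow> real^'n1"
  assumes "T > 0" and "\<gamma> > 0" and "psd Q" and "psd H"
    and "H1 A G \<Gamma> Q H \<gamma> T"
    and "L2_on T \<nu>"
  shows "(\<exists>zi z q. bvp_sol A B G \<Gamma> Q H \<gamma> T \<nu> zi z q) \<and>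
         (\<forall>zi z q zi' z' q'. bvp_sol A B G \<Gamma> Q H \<gamma> T \<nu> zi z q \<longrightarrow>
             bvp_sol A B G \<Gamma> Q H \<gamma> T \<nu> zi' z' q' \<longrightarrow>
             (\<forall>t\<in>{0..T}. zi t = zi' t \<and> z t = z' t \<and> q t = q' t))"
  using bvp_sol_exists[OF assms(1,2,5,6)] bvp_sol_unique[OF assms(1,2,5)] by blast

end
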